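(* Let $x$ be an element of a commutative ring $R$. The morphism of $R$-complexes $f:\mathcal{L}_x\to\check{C}_x$ given in degree $0$ by $f_0:R[U]\to R$, $r(U)\mapsto r(0)$, and in degree $1$ by $f_1:UR[U]\to R_x$, $r(U)\mapsto r(1/x)$, is a quasi-isomorphism.
   Context: $\mathcal{L}_x$ denotes the $R$-complex $0\to R[U]\xrightarrow{\psi} UR[U]\to 0$ with $R[U]$ in cohomological degree $0$, $UR[U]$ (polynomials without constant term) in degree $1$, and $\psi(r(U))=r(0)-(1-xU)r(U)$. $\check{C}_x$ denotes the complex $0\to R\xrightarrow{\iota_x} R_x\to 0$ in degrees $0,1$, with $\iota_x(r)=r/1$. *)

theory Defs
  imports "HOL-Computational_Algebra.Polynomial"
begin

text \<open>Localization R_x, represented as pairs (a, n) standing for a / x^n,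
  modulo the usual equivalence relation.\<close>
definition loc_eq :: "'a::comm_ring_1 \<Rightarrow> 'a \<times> nat \<Rightarrow> 'a \<times> nat \<Rightarrow> bool" where
  "loc_eq x p q \<longleftrightarrow> (\<exists>k. x ^ k * (x ^ snd q * fst p - x ^ snd p * fst q) = 0)"

definition loc_add :: "'a::comm_ring_1 \<Rightarrow> 'a \<times> nat \<Rightarrow> 'a \<times> nat \<Rightarrow> 'a \<times> nat" where
  "loc_add x p q = (x ^ snd q * fst p + x ^ snd p * fst q, snd p + snd q)"

definition loc_of :: "'a::comm_ring_1 \<Rightarrow> 'a \<times> nat" where
  "loc_of r = (r, 0)"

definition UPoly :: "'a::comm_ring_1 poly set" where
  "UPoly = {p. coeff p 0 = 0}"

definition psi :: "'a::comm_ring_1 \<Rightarrow> 'a poly \<Rightarrow> 'a poly" where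
  "psi x r = [:poly r 0:] - [:1, - x:] * r"

definition f0 :: "'a::comm_ring_1 poly \<Rightarrow> 'a" where
  "f0 r = poly r 0"

text \<open>f_1(r) = r(1/x) = sum_i r_i / x^i, represented as (sum_i r_i x^(d-i)) / x^d, d = degree r\<close>
definition f1 :: "'a::comm_ring_1 \<Rightarrow> 'a poly \<Rightarrow> 'a \<times> nat" where
  "f1 x r = ((\<Sum>i\<le>degree r. coeff r i * x ^ (degree r - i)), degree r)"

end

theory Submission
  imports Defs
begin

text \<open>The equation \<open>psi x r = s\<close> says \<open>s\<^sub>0 = 0\<close> and \<open>r\<^sub>i\<^sub>+\<^sub>1 = x r\<^sub>i - s\<^sub>i\<^sub>+\<^sub>1\<close>, so all
  coefficients of \<open>r\<close> are forced by \<open>a = r(0)\<close>: \<open>r\<^sub>i = x\<^sup>i a - \<Sum>\<^sub>j\<^sub>\<le>\<^sub>i x\<^sup>i\<^sup>-\<^sup>j s\<^sub>j\<close>. If \<open>degree s \<le> D\<close>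
  then \<open>r\<^sub>D\<^sub>+\<^sub>m = x\<^sup>m x\<^sup>D (a - s(1/x))\<close>, so a polynomial solution exists exactly when
  \<open>a = s(1/x)\<close> in \<open>R\<^sub>x\<close>. For \<open>s = 0\<close> this identifies \<open>ker psi\<close> with the \<open>x\<close>-power torsion
  of \<open>R\<close>, i.e. with \<open>ker iota\<^sub>x\<close>; for \<open>s = p - q\<close> it is injectivity on \<open>H\<^sup>1\<close>. Surjectivity on
  \<open>H\<^sup>1\<close> holds because \<open>b/x\<^sup>n = f\<^sub>1(x b U\<^sup>n\<^sup>+\<^sup>1)\<close>.\<close>

text \<open>For \<open>degree p \<le> D\<close>, \<open>eval_recip x D p = x\<^sup>D p(1/x)\<close> is the numerator of \<open>p(1/x)\<close> over the
  denominator \<open>x\<^sup>D\<close>; \<open>f1\<close> uses \<open>D = degree p\<close>.\<close>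

definition eval_recip :: "'a::comm_ring_1 \<Rightarrow> nat \<Rightarrow> 'a poly \<Rightarrow> 'a" where
  "eval_recip x D p = (\<Sum>i\<le>D. coeff p i * x ^ (D - i))"

lemma f1_eq_eval_recip: "f1 x p = (eval_recip x (degree p) p, degree p)"
  by (simp add: f1_def eval_recip_def)

lemma eval_recip_Suc:
  assumes "degree p \<le> D"
  shows "eval_recip x (Suc D) p = x * eval_recip x D p"
proof -
  have "coeff p (Suc D) = 0"
    using assms by (simp add: coeff_eq_0)
  moreover have "(\<Sum>i\<le>D. coeff p i * x ^ (Suc D - i)) = (\<Sum>i\<le>D. x * (coeff p i * x ^ (D - i)))"
    by (rule sum.cong) (auto simp: Suc_diff_le mult_ac)
  ultimately show ?thesis
    by (simp add: eval_recip_def sum_distrib_left)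
qed

lemma eval_recip_add_degree:
  assumes "degree p \<le> D"
  shows "eval_recip x (D + m) p = x ^ m * eval_recip x D p"
proof (induction m)
  case (Suc m)
  then show ?case
    using eval_recip_Suc[of p "D + m" x] assms by simp
qed simp

lemma eval_recip_add: "eval_recip x D (p + q) = eval_recip x D p + eval_recip x D q"
  by (simp add: eval_recip_def sum.distrib algebra_simps)

lemma eval_recip_diff: "eval_recip x D (p - q) = eval_recip x D p - eval_recip x D q"
  by (simp add: eval_recip_def sum_subtractf algebra_simps)

lemma eval_recip_smult: "eval_recip x D (smult c p) = c * eval_recip x D p"
  by (simp add: eval_recip_def sum_distrib_left mult_ac)

lemma eval_recip_pCons_0: "eval_recip x (Suc D) (pCons 0 p) = eval_recip x D p"
  unfolding eval_recip_def by (subst sum.atMost_Suc_shift) simp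

lemma eval_recip_monom:
  assumes "n \<le> D"
  shows "eval_recip x D (monom c n) = c * x ^ (D - n)"
proof -
  have "eval_recip x D (monom c n) = (\<Sum>i\<le>D. if i = n then c * x ^ (D - n) else 0)"
    unfolding eval_recip_def by (rule sum.cong) (auto simp: coeff_monom)
  then show ?thesis
    using assms by simp
qed

lemma loc_eq_refl [simp]: "loc_eq x p p"
  by (auto simp: loc_eq_def)

lemma loc_eq_sym:
  assumes "loc_eq x p q"
  shows "loc_eq x q p"
proof -
  obtain k where "x ^ k * (x ^ snd q * fst p - x ^ snd p * fst q) = 0"
    using assms by (auto simp: loc_eq_def)
  moreover have "x ^ k * (x ^ snd p * fst q - x ^ snd q * fst p)
      = - (x ^ k * (x ^ snd q * fst p - x ^ snd p * fst q))"
    by (simp add: algebra_simps)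
  ultimately show ?thesis
    by (auto simp: loc_eq_def)
qed

lemma ex_power_mult_eq_0_iff:
  fixes x c :: "'a::comm_semiring_1"
  shows "(\<exists>k. x ^ k * (x ^ m * c) = 0) \<longleftrightarrow> (\<exists>k. x ^ k * c = 0)"
proof
  assume "\<exists>k. x ^ k * (x ^ m * c) = 0"
  then obtain k where "x ^ k * (x ^ m * c) = 0" ..
  then have "x ^ (k + m) * c = 0"
    by (simp add: power_add mult.assoc)
  then show "\<exists>k. x ^ k * c = 0" ..
next
  assume "\<exists>k. x ^ k * c = 0"
  then obtain k where "x ^ k * c = 0" ..
  then have "x ^ k * (x ^ m * c) = 0"
    by (simp add: mult.left_commute[of "x ^ k"])
  then show "\<exists>k. x ^ k * (x ^ m * c) = 0" ..
qed

lemma loc_eq_scale_left: "loc_eq x (x ^ m * a, n + m) q \<longleftrightarrow> loc_eq x (a, n) q"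
proof -
  have "x ^ snd q * (x ^ m * a) - x ^ (n + m) * fst q = x ^ m * (x ^ snd q * a - x ^ n * fst q)"
    by (simp add: algebra_simps power_add)
  then show ?thesis
    by (simp add: loc_eq_def ex_power_mult_eq_0_iff)
qed

lemma loc_eq_same_denom: "loc_eq x (a, n) (b, n) \<longleftrightarrow> (\<exists>k. x ^ k * (a - b) = 0)"
proof -
  have "x ^ n * a - x ^ n * b = x ^ n * (a - b)"
    by (simp add: algebra_simps)
  then show ?thesis
    by (simp add: loc_eq_def ex_power_mult_eq_0_iff)
qed

lemma loc_eq_f1_iff:
  assumes "degree p \<le> D"
  shows "loc_eq x (f1 x p) q \<longleftrightarrow> loc_eq x (eval_recip x D p, D) q"
proof -
  have "eval_recip x D p = x ^ (D - degree p) * eval_recip x (degree p) p"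
    using eval_recip_add_degree[of p "degree p" x "D - degree p"] assms by simp
  then show ?thesis
    using loc_eq_scale_left[of x "D - degree p" _ "degree p" q] assms
    by (simp add: f1_eq_eval_recip)
qed

lemma psi_eq_pCons: "psi x r = [:poly r 0:] - r + pCons 0 (smult x r)"
  unfolding psi_def by (simp add: algebra_simps smult_add_right)

lemma coeff_psi_0 [simp]: "coeff (psi x r) 0 = 0"
  by (simp add: psi_eq_pCons poly_0_coeff_0)

lemma coeff_psi_Suc [simp]: "coeff (psi x r) (Suc i) = x * coeff r i - coeff r (Suc i)"
  by (simp add: psi_eq_pCons)

lemma psi_eq_iff:
  "psi x r = s \<longleftrightarrow> coeff s 0 = 0 \<and> (\<forall>i. coeff s (Suc i) = x * coeff r i - coeff r (Suc i))"
proof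
  assume coeffs: "coeff s 0 = 0 \<and> (\<forall>i. coeff s (Suc i) = x * coeff r i - coeff r (Suc i))"
  show "psi x r = s"
  proof (rule poly_eqI)
    fix n
    show "coeff (psi x r) n = coeff s n"
      using coeffs by (cases n) simp_all
  qed
qed auto

lemma degree_psi_le: "degree (psi x r) \<le> Suc (degree r)"
proof -
  have "degree (pCons 0 (smult x r)) \<le> Suc (degree r)"
    by (metis degree_pCons_le degree_smult_le le_trans Suc_le_mono)
  moreover have "degree ([:poly r 0:] - r) \<le> degree r"
    by (rule degree_diff_le) auto
  ultimately show ?thesis
    unfolding psi_eq_pCons by (meson degree_add_le le_SucI)
qed

lemma eval_recip_psi:
  assumes "degree r \<le> D"
  shows "eval_recip x (Suc D) (psi x r) = x ^ Suc D * poly r 0"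
  using eval_recip_Suc[OF assms, of x] eval_recip_monom[of 0 "Suc D" x "poly r 0"]
  by (simp add: psi_eq_pCons eval_recip_add eval_recip_diff eval_recip_smult eval_recip_pCons_0
      monom_0 mult.commute)

lemma psi_eq_0_imp_coeff:
  assumes "psi x r = 0"
  shows "coeff r i = x ^ i * poly r 0"
proof (induction i)
  case 0
  then show ?case by (simp add: poly_0_coeff_0)
next
  case (Suc i)
  have "x * coeff r i - coeff r (Suc i) = 0"
    using coeff_psi_Suc[of x r i] assms by simp
  then show ?case
    using Suc by (simp add: mult.assoc)
qed

lemma psi_preimage:
  assumes s0: "coeff s 0 = 0" and deg: "degree s \<le> D"
    and torsion: "x ^ k * (eval_recip x D s - x ^ D * a) = 0"
  shows "\<exists>r. psi x r = s \<and> poly r 0 = a"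
proof -
  define c where "c i = x ^ i * a - (\<Sum>j\<le>i. x ^ (i - j) * coeff s j)" for i
  have c_Suc: "c (Suc i) = x * c i - coeff s (Suc i)" for i
  proof -
    have "(\<Sum>j\<le>Suc i. x ^ (Suc i - j) * coeff s j)
        = x * (\<Sum>j\<le>i. x ^ (i - j) * coeff s j) + coeff s (Suc i)"
      by (simp add: sum_distrib_left, rule sum.cong) (auto simp: Suc_diff_le mult_ac)
    then show ?thesis
      by (simp add: c_def algebra_simps)
  qed
  have c_add: "c (D + m) = x ^ m * c D" for m
  proof (induction m)
    case (Suc m)
    have "coeff s (Suc (D + m)) = 0"
      using deg by (simp add: coeff_eq_0)
    then show ?case
      using c_Suc[of "D + m"] Suc by simp
  qed simp
  have c_vanish: "c (D + k) = 0"
  proof -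
    have "c D = x ^ D * a - eval_recip x D s"
      by (simp add: c_def eval_recip_def mult_ac)
    then have "c (D + k) = x ^ k * (x ^ D * a - eval_recip x D s)"
      using c_add[of k] by simp
    also have "\<dots> = - (x ^ k * (eval_recip x D s - x ^ D * a))"
      by (simp add: algebra_simps)
    finally show ?thesis
      using torsion by simp
  qed
  define r where "r = (\<Sum>i<D + k. monom (c i) i)"
  have coeff_r: "coeff r i = (if i < D + k then c i else 0)" for i
    by (simp add: r_def coeff_sum coeff_monom)
  have "psi x r = s"
    unfolding psi_eq_iff
  proof (intro conjI allI)
    fix i
    show "coeff s (Suc i) = x * coeff r i - coeff r (Suc i)"
    proof (cases "Suc i < D + k")
      case False
      then consider "Suc i = D + k" | "D + k < Suc i" by linarith
      then show ?thesis
      proof cases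
        case 2
        then have "coeff s (Suc i) = 0"
          using deg by (simp add: coeff_eq_0)
        then show ?thesis
          using 2 by (simp add: coeff_r)
      qed (use c_Suc[of i] c_vanish in \<open>simp add: coeff_r\<close>)
    qed (simp add: coeff_r c_Suc)
  qed (rule s0)
  moreover have "poly r 0 = a"
  proof (cases "D + k")
    case 0
    then show ?thesis
      using torsion s0 by (simp add: eval_recip_def poly_0_coeff_0 coeff_r)
  qed (simp add: poly_0_coeff_0 coeff_r c_def s0)
  ultimately show ?thesis
    by blast
qed

lemma f_commutes: "loc_eq x (loc_of (f0 r)) (f1 x (psi x r))"
proof (rule loc_eq_sym)
  have "loc_eq x (x ^ Suc (degree r) * poly r 0, 0 + Suc (degree r)) (loc_of (f0 r))"
    unfolding loc_eq_scale_left by (simp add: loc_of_def loc_eq_def f0_def)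
  then show "loc_eq x (f1 x (psi x r)) (loc_of (f0 r))"
    unfolding loc_eq_f1_iff[OF degree_psi_le] eval_recip_psi[OF order_refl] by simp
qed

lemma f0_bij_betw_kernels: "bij_betw f0 {r. psi x r = 0} {a. loc_eq x (loc_of a) (loc_of 0)}"
proof (rule bij_betw_imageI)
  show "inj_on f0 {r. psi x r = 0}"
    by (intro inj_onI poly_eqI) (simp add: f0_def psi_eq_0_imp_coeff)
  have "loc_eq x (loc_of (f0 r)) (loc_of 0)" if "psi x r = 0" for r
    using f_commutes[of x r] that by (simp add: f1_def loc_of_def)
  then have "f0 ` {r. psi x r = 0} \<subseteq> {a. loc_eq x (loc_of a) (loc_of 0)}"
    by blast
  moreover have "{a. loc_eq x (loc_of a) (loc_of 0)} \<subseteq> f0 ` {r. psi x r = 0}"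
  proof
    fix a
    assume "a \<in> {a. loc_eq x (loc_of a) (loc_of 0)}"
    then obtain k where "x ^ k * (eval_recip x 0 0 - x ^ 0 * a) = 0"
      by (auto simp: loc_eq_def loc_of_def eval_recip_def)
    then show "a \<in> f0 ` {r. psi x r = 0}"
      using psi_preimage[of 0 0] by (force simp: f0_def)
  qed
  ultimately show "f0 ` {r. psi x r = 0} = {a. loc_eq x (loc_of a) (loc_of 0)}"
    by blast
qed

lemma f1_surj_modulo_images: "\<exists>p\<in>UPoly. \<exists>a. loc_eq x (f1 x p) (loc_add x y (loc_of a))"
proof -
  obtain b n where y: "y = (b, n)"
    by fastforce
  define p where "p = monom (x * b) (Suc n)"
  have "loc_eq x (x ^ 1 * b, n + 1) (b, n)"
    unfolding loc_eq_scale_left by (rule loc_eq_refl)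
  then have "loc_eq x (f1 x p) (loc_add x y (loc_of 0))"
    using loc_eq_f1_iff[of p "Suc n" x]
    by (simp add: p_def degree_monom_le eval_recip_monom y loc_add_def loc_of_def)
  moreover have "p \<in> UPoly"
    by (simp add: p_def UPoly_def coeff_monom)
  ultimately show ?thesis
    by blast
qed

lemma f1_inj_modulo_images:
  assumes "p \<in> UPoly" and "q \<in> UPoly"
    and "loc_eq x (f1 x p) (loc_add x (f1 x q) (loc_of a))"
  shows "\<exists>r. p = q + psi x r"
proof -
  let ?D = "degree p + degree q"
  let ?b = "eval_recip x (degree q) q + x ^ degree q * a"
  have "loc_eq x (eval_recip x ?D p, ?D) (?b, degree q)"
    using assms(3) loc_eq_f1_iff[of p ?D x]
    by (simp add: loc_add_def loc_of_def f1_eq_eval_recip)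
  then have "loc_eq x (x ^ degree p * ?b, degree q + degree p) (eval_recip x ?D p, ?D)"
    unfolding loc_eq_scale_left by (rule loc_eq_sym)
  moreover have "x ^ degree p * ?b = eval_recip x ?D q + x ^ ?D * a"
    using eval_recip_add_degree[of q "degree q" x "degree p"]
    by (simp add: algebra_simps power_add)
  ultimately have "loc_eq x (eval_recip x ?D p, ?D) (eval_recip x ?D q + x ^ ?D * a, ?D)"
    by (simp add: add.commute loc_eq_sym)
  then obtain k where "x ^ k * (eval_recip x ?D p - (eval_recip x ?D q + x ^ ?D * a)) = 0"
    unfolding loc_eq_same_denom by blast
  then have "x ^ k * (eval_recip x ?D (p - q) - x ^ ?D * a) = 0"
    by (simp add: eval_recip_diff diff_diff_eq)
  moreover have "degree (p - q) \<le> ?D"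
    by (meson degree_diff_le le_add1 le_add2)
  moreover have "coeff (p - q) 0 = 0"
    using assms(1,2) by (simp add: UPoly_def)
  ultimately obtain r where "psi x r = p - q"
    using psi_preimage[of "p - q" ?D x k a] by blast
  then show ?thesis
    by (intro exI[of _ r]) simp
qed

theorem lemma3p5:
  fixes x :: "'a::comm_ring_1"
  shows
    \<comment> \<open>f is a morphism of complexes (the square commutes, up to equality in R_x)\<close>
    "(\<forall>r. loc_eq x (loc_of (f0 r)) (f1 x (psi x r)))
     \<comment> \<open>H^0: f_0 restricts to a bijection ker psi -> ker iota_x\<close>
   \<and> bij_betw f0 {r. psi x r = 0} {a. loc_eq x (loc_of a) (loc_of 0)}
     \<comment> \<open>H^1: induced map U R[U] / im psi -> R_x / im iota_x is surjective\<close>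
   \<and> (\<forall>y. \<exists>p\<in>UPoly. \<exists>a. loc_eq x (f1 x p) (loc_add x y (loc_of a)))
     \<comment> \<open>H^1: and injective\<close>
   \<and> (\<forall>p\<in>UPoly. \<forall>q\<in>UPoly.
        (\<exists>a. loc_eq x (f1 x p) (loc_add x (f1 x q) (loc_of a)))
        \<longrightarrow> (\<exists>r. p = q + psi x r))"
  by (intro conjI allI ballI impI f_commutes f0_bij_betw_kernels f1_surj_modulo_images)
    (use f1_inj_modulo_images in blast)

end
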